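(* Let $G=(V,E)$ be a transitive and finite directed graph which is not a cycle. Let $e_0\in E$ be such that $r(e_0)$ has in-degree $1$. Then: (i) $e_0$ is not a loop; (ii) the edge contraction $G/e_0$ has one fewer vertex of in-degree $1$ than $G$ has; (iii) $G/e_0$ is a finite transitive directed graph which is not a cycle.
   Context: A directed graph $G=(V,E,r,s)$; the in-degree of $v$ is $|r^{-1}(v)|$; a loop is an edge $e$ with $r(e)=s(e)$. $G$ is transitive if there is a path between any two vertices. "$G$ is a cycle" means $G$ is the $n$-cycle graph for some $n\ge1$ (vertices $v_1,\dots,v_n$, exactly one edge from $v_i$ to $v_{i+1}$, indices mod $n$). The edge contraction $G/e$ is obtained by removing the edge $e$ and identifying $s(e)$ and $r(e)$; when $r(e)\ne s(e)$ this is done by removing the vertex $r(e)$ and changing every edge with source (resp. range) $r(e)$ to have source (resp. range) $s(e)$. *)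

theory Defs
  imports Main
begin

text \<open>A directed graph G = (V, E, r, s): vertices V, edges E, range map r, source map s.
  Multiple edges and loops are allowed.\<close>

definition dgraph :: "'v set \<Rightarrow> 'e set \<Rightarrow> ('e \<Rightarrow> 'v) \<Rightarrow> ('e \<Rightarrow> 'v) \<Rightarrow> bool" where
  "dgraph V E r s \<longleftrightarrow> (\<forall>e\<in>E. r e \<in> V \<and> s e \<in> V)"

definition finite_dgraph :: "'v set \<Rightarrow> 'e set \<Rightarrow> ('e \<Rightarrow> 'v) \<Rightarrow> ('e \<Rightarrow> 'v) \<Rightarrow> bool" where
  "finite_dgraph V E r s \<longleftrightarrow> dgraph V E r s \<and> finite V \<and> finite E"

definition in_degree :: "'e set \<Rightarrow> ('e \<Rightarrow> 'v) \<Rightarrow> 'v \<Rightarrow> nat" where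
  "in_degree E r v = card {e \<in> E. r e = v}"

definition is_loop :: "('e \<Rightarrow> 'v) \<Rightarrow> ('e \<Rightarrow> 'v) \<Rightarrow> 'e \<Rightarrow> bool" where
  "is_loop r s e \<longleftrightarrow> r e = s e"

definition edge_rel :: "'e set \<Rightarrow> ('e \<Rightarrow> 'v) \<Rightarrow> ('e \<Rightarrow> 'v) \<Rightarrow> ('v \<times> 'v) set" where
  "edge_rel E r s = {(s e, r e) | e. e \<in> E}"

definition transitive_graph :: "'v set \<Rightarrow> 'e set \<Rightarrow> ('e \<Rightarrow> 'v) \<Rightarrow> ('e \<Rightarrow> 'v) \<Rightarrow> bool" where
  "transitive_graph V E r s \<longleftrightarrow> (\<forall>u\<in>V. \<forall>v\<in>V. (u, v) \<in> (edge_rel E r s)\<^sup>*)"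

definition is_cycle :: "'v set \<Rightarrow> 'e set \<Rightarrow> ('e \<Rightarrow> 'v) \<Rightarrow> ('e \<Rightarrow> 'v) \<Rightarrow> bool" where
  "is_cycle V E r s \<longleftrightarrow>
     (\<exists>n::nat. \<exists>f. n \<ge> 1 \<and> bij_betw f {0..<n} V \<and>
        (\<forall>i<n. \<forall>j<n. card {e \<in> E. s e = f i \<and> r e = f j} =
                        (if j = (i + 1) mod n then 1 else 0)) \<and>
        (\<forall>e\<in>E. s e \<in> V \<and> r e \<in> V) \<and> finite E)"

definition contr_V :: "'v set \<Rightarrow> ('e \<Rightarrow> 'v) \<Rightarrow> ('e \<Rightarrow> 'v) \<Rightarrow> 'e \<Rightarrow> 'v set" where
  "contr_V V r s e0 = (if r e0 = s e0 then V else V - {r e0})"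

definition contr_E :: "'e set \<Rightarrow> 'e \<Rightarrow> 'e set" where
  "contr_E E e0 = E - {e0}"

definition contr_map :: "('e \<Rightarrow> 'v) \<Rightarrow> ('e \<Rightarrow> 'v) \<Rightarrow> 'e \<Rightarrow> ('e \<Rightarrow> 'v) \<Rightarrow> ('e \<Rightarrow> 'v)" where
  "contr_map r s e0 t = (\<lambda>e. if t e = r e0 then s e0 else t e)"

definition contr_r :: "('e \<Rightarrow> 'v) \<Rightarrow> ('e \<Rightarrow> 'v) \<Rightarrow> 'e \<Rightarrow> ('e \<Rightarrow> 'v)" where
  "contr_r r s e0 = contr_map r s e0 r"

definition contr_s :: "('e \<Rightarrow> 'v) \<Rightarrow> ('e \<Rightarrow> 'v) \<Rightarrow> 'e \<Rightarrow> ('e \<Rightarrow> 'v)" where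
  "contr_s r s e0 = contr_map r s e0 s"

end

theory Submission
  imports Defs "HOL-Combinatorics.Orbits"
begin

text \<open>A finite strongly connected graph is a cycle exactly when every vertex has out-degree one.
  If \<open>e\<^sub>0\<close> were a loop, it would be the only edge entering \<open>r e\<^sub>0\<close>, so no other vertex could
  reach \<open>r e\<^sub>0\<close> and \<open>G\<close> would be a single loop, i.e. a 1-cycle. Otherwise the contraction maps
  paths to paths, keeps the in-degree of every surviving vertex, and changes out-degrees only at
  \<open>s e\<^sub>0\<close>, whose new out-degree is \<open>outdeg (s e\<^sub>0) - 1 + outdeg (r e\<^sub>0)\<close> with both out-degrees on
  the right positive. Hence if all out-degrees of \<open>G/e\<^sub>0\<close> were one, so would be those of \<open>G\<close>.\<close>

definition out_degree :: "'e set \<Rightarrow> ('e \<Rightarrow> 'v) \<Rightarrow> 'v \<Rightarrow> nat" where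
  "out_degree E s v = card {e \<in> E. s e = v}"

lemma out_degree_is_cycle:
  assumes "is_cycle V E r s" "v \<in> V"
  shows "out_degree E s v = 1"
proof -
  obtain n :: nat and f where bij: "bij_betw f {0..<n} V"
    and C: "\<forall>i<n. \<forall>j<n. card {e \<in> E. s e = f i \<and> r e = f j} = (if j = (i + 1) mod n then 1 else 0)"
    and ends: "\<forall>e\<in>E. s e \<in> V \<and> r e \<in> V" and "finite E"
    using assms(1) unfolding is_cycle_def by blast
  obtain i where i: "i < n" "v = f i"
    using bij assms(2) by (auto simp: bij_betw_def)
  have "r e = f ((i + 1) mod n)" if e: "e \<in> E" "s e = v" for e
  proof -
    obtain j where j: "j < n" "r e = f j"
      using bij ends e by (force simp: bij_betw_def)
    have "card {e \<in> E. s e = f i \<and> r e = f j} \<noteq> 0"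
      using \<open>finite E\<close> e i j by auto
    then show ?thesis
      using C i j by (metis (no_types, lifting))
  qed
  then have "{e \<in> E. s e = v} = {e \<in> E. s e = f i \<and> r e = f ((i + 1) mod n)}"
    using i by auto
  then show ?thesis
    using C i unfolding out_degree_def by simp
qed

lemma bij_betw_funpow_orbit:
  assumes "x \<in> orbit f x"
  shows "bij_betw (\<lambda>i. (f ^^ i) x) {0..<funpow_dist1 f x x} (orbit f x)"
  unfolding bij_betw_def
  using inj_on_funpow_dist1[OF assms] orbit_conv_funpow_dist1[OF assms] by simp

lemma funpow_Suc_mod_orbit:
  assumes "x \<in> orbit f x"
  shows "f ((f ^^ i) x) = (f ^^ ((i + 1) mod funpow_dist1 f x x)) x"
  using funpow_mod_eq[of _ f x "i + 1", OF funpow_dist1_prop[OF assms]] by simp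

lemma trancl_edge_rel_in_orbit:
  assumes "\<forall>v\<in>V. {e \<in> E. s e = v} = {out v}" "\<forall>e\<in>E. s e \<in> V"
    and "(a, b) \<in> (edge_rel E r s)\<^sup>+"
  shows "b \<in> orbit (\<lambda>v. r (out v)) a"
proof -
  have edge_out: "z = r (out y)" if yz: "(y, z) \<in> edge_rel E r s" for y z
  proof -
    obtain e where e: "e \<in> E" "y = s e" "z = r e"
      using yz unfolding edge_rel_def by blast
    then have "e \<in> {e' \<in> E. s e' = y}" by simp
    then have "e = out y"
      using assms(1,2) e by blast
    then show ?thesis
      using e by simp
  qed
  show ?thesis
    using assms(3)
  proof (induction rule: trancl_induct)
    case (base b)
    then show ?case using edge_out orbit.base by metis
  next
    case (step y z)
    then show ?case using edge_out orbit.step by metis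
  qed
qed

text \<open>Strong connectivity makes \<open>V\<close> a single orbit of the map sending each vertex along its
  unique out-edge; enumerating that orbit exhibits the cycle.\<close>
lemma is_cycle_if_out_degree_one:
  assumes "finite_dgraph V E r s" "transitive_graph V E r s" "V \<noteq> {}"
    and "\<forall>v\<in>V. out_degree E s v = 1"
  shows "is_cycle V E r s"
proof -
  have ends: "\<forall>e\<in>E. s e \<in> V \<and> r e \<in> V" and "finite E"
    using assms(1) unfolding finite_dgraph_def dgraph_def by auto
  obtain out where out: "\<forall>v\<in>V. {e \<in> E. s e = v} = {out v}"
    using assms(4) unfolding out_degree_def card_1_singleton_iff One_nat_def by metis
  define \<sigma> where "\<sigma> = (\<lambda>v. r (out v))"
  have out_E: "out v \<in> E" "s (out v) = v" if "v \<in> V" for v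
    using out that by blast+
  have \<sigma>_V: "\<sigma> v \<in> V" if "v \<in> V" for v
    using ends out_E[OF that] unfolding \<sigma>_def by blast
  have edge_\<sigma>: "(v, \<sigma> v) \<in> edge_rel E r s" if "v \<in> V" for v
    using out_E[OF that] unfolding edge_rel_def \<sigma>_def by (metis (mono_tags, lifting) mem_Collect_eq)
  obtain v0 where v0: "v0 \<in> V"
    using assms(3) by blast
  have V_orbit: "V = orbit \<sigma> v0"
  proof
    show "V \<subseteq> orbit \<sigma> v0"
    proof
      fix b assume "b \<in> V"
      then have "(\<sigma> v0, b) \<in> (edge_rel E r s)\<^sup>*"
        using assms(2) \<sigma>_V[OF v0] unfolding transitive_graph_def by blast
      then have "(v0, b) \<in> (edge_rel E r s)\<^sup>+"
        using edge_\<sigma>[OF v0] by (simp add: rtrancl_into_trancl2)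
      moreover have "\<forall>e\<in>E. s e \<in> V"
        using ends by blast
      ultimately show "b \<in> orbit \<sigma> v0"
        unfolding \<sigma>_def using trancl_edge_rel_in_orbit[OF out] by blast
    qed
    show "orbit \<sigma> v0 \<subseteq> V"
    proof
      fix x assume "x \<in> orbit \<sigma> v0"
      then show "x \<in> V" by induction (use v0 \<sigma>_V in auto)
    qed
  qed
  then have v0_orbit: "v0 \<in> orbit \<sigma> v0"
    using v0 by blast
  define n where "n = funpow_dist1 \<sigma> v0 v0"
  define g where "g i = (\<sigma> ^^ i) v0" for i
  have bij: "bij_betw g {0..<n} V"
    unfolding g_def n_def V_orbit using bij_betw_funpow_orbit[OF v0_orbit] .
  have g_V: "g i \<in> V" for i
    unfolding g_def V_orbit using funpow_in_orbit[OF v0_orbit] .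
  have "card {e \<in> E. s e = g i \<and> r e = g j} = (if j = (i + 1) mod n then 1 else 0)"
    if "i < n" "j < n" for i j
  proof -
    have "g ((i + 1) mod n) = g j \<longleftrightarrow> j = (i + 1) mod n"
      using bij that unfolding bij_betw_def inj_on_def by auto
    moreover have "{e \<in> E. s e = g i} = {out (g i)}"
      using out g_V by blast
    then have "{e \<in> E. s e = g i \<and> r e = g j} = (if r (out (g i)) = g j then {out (g i)} else {})"
      by (auto simp: set_eq_iff) metis
    moreover have "r (out (g i)) = g ((i + 1) mod n)"
      using funpow_Suc_mod_orbit[OF v0_orbit] unfolding g_def n_def \<sigma>_def by simp
    ultimately show ?thesis
      by simp
  qed
  moreover have "n \<ge> 1"
    unfolding n_def by simp
  ultimately show ?thesis
    unfolding is_cycle_def using bij ends \<open>finite E\<close> by blast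
qed

lemma out_degree_pos: "finite E \<Longrightarrow> e \<in> E \<Longrightarrow> out_degree E s (s e) > 0"
  unfolding out_degree_def by (auto simp: card_gt_0_iff)

lemma in_degree_one_edge_unique:
  assumes "in_degree E r (r e0) = 1" "e0 \<in> E" "e \<in> E" "r e = r e0"
  shows "e = e0"
proof -
  obtain x where "{e \<in> E. r e = r e0} = {x}"
    using assms(1) unfolding in_degree_def by (rule card_1_singletonE)
  then show ?thesis
    using assms(2-4) by (metis (mono_tags, lifting) mem_Collect_eq singletonD)
qed

lemma rtrancl_edge_rel_into_closed:
  assumes "(a, w) \<in> (edge_rel E r s)\<^sup>*" and "\<forall>e\<in>E. r e = w \<longrightarrow> s e = w"
  shows "a = w"
  using assms(1)
proof (induction rule: converse_rtrancl_induct)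
  case (step a b)
  then show ?case using assms(2) unfolding edge_rel_def by blast
qed simp

definition contr_vertex :: "('e \<Rightarrow> 'v) \<Rightarrow> ('e \<Rightarrow> 'v) \<Rightarrow> 'e \<Rightarrow> 'v \<Rightarrow> 'v" where
  "contr_vertex r s e0 x = (if x = r e0 then s e0 else x)"

lemma contr_r_apply: "contr_r r s e0 e = contr_vertex r s e0 (r e)"
  unfolding contr_r_def contr_map_def contr_vertex_def ..

lemma contr_s_apply: "contr_s r s e0 e = contr_vertex r s e0 (s e)"
  unfolding contr_s_def contr_map_def contr_vertex_def ..

lemma contr_vertex_contr_V: "x \<in> contr_V V r s e0 \<Longrightarrow> contr_vertex r s e0 x = x"
  unfolding contr_V_def contr_vertex_def by (auto split: if_splits)

lemma finite_dgraph_contr: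
  assumes "finite_dgraph V E r s" "e0 \<in> E"
  shows "finite_dgraph (contr_V V r s e0) (contr_E E e0) (contr_r r s e0) (contr_s r s e0)"
  using assms
  unfolding finite_dgraph_def dgraph_def contr_V_def contr_E_def contr_r_apply contr_s_apply
    contr_vertex_def
  by auto

lemma rtrancl_edge_rel_contr:
  assumes "(a, b) \<in> (edge_rel E r s)\<^sup>*"
  shows "(contr_vertex r s e0 a, contr_vertex r s e0 b)
    \<in> (edge_rel (contr_E E e0) (contr_r r s e0) (contr_s r s e0))\<^sup>*"
  using assms
proof (induction rule: rtrancl_induct)
  case (step y z)
  then obtain e where e: "e \<in> E" "y = s e" "z = r e"
    unfolding edge_rel_def by blast
  show ?case
  proof (cases "e = e0")
    case True
    then have "contr_vertex r s e0 z = contr_vertex r s e0 y"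
      using e unfolding contr_vertex_def by simp
    then show ?thesis using step.IH by simp
  next
    case False
    then have "(contr_vertex r s e0 y, contr_vertex r s e0 z)
        \<in> edge_rel (contr_E E e0) (contr_r r s e0) (contr_s r s e0)"
      using e unfolding edge_rel_def contr_E_def contr_r_apply contr_s_apply by blast
    then show ?thesis using step.IH by simp
  qed
qed simp

lemma transitive_graph_contr:
  assumes "transitive_graph V E r s"
  shows "transitive_graph (contr_V V r s e0) (contr_E E e0) (contr_r r s e0) (contr_s r s e0)"
  unfolding transitive_graph_def
proof (intro ballI)
  fix a b assume ab: "a \<in> contr_V V r s e0" "b \<in> contr_V V r s e0"
  then have "(a, b) \<in> (edge_rel E r s)\<^sup>*"
    using assms unfolding transitive_graph_def contr_V_def by (auto split: if_splits)
  then show "(a, b) \<in> (edge_rel (contr_E E e0) (contr_r r s e0) (contr_s r s e0))\<^sup>*"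
    using rtrancl_edge_rel_contr[of a b E r s e0] contr_vertex_contr_V[OF ab(1)]
      contr_vertex_contr_V[OF ab(2)] by simp
qed

lemma in_degree_contr:
  assumes "in_degree E r (r e0) = 1" "e0 \<in> E" "v \<noteq> r e0"
  shows "in_degree (contr_E E e0) (contr_r r s e0) v = in_degree E r v"
proof -
  have "r e \<noteq> r e0" if "e \<in> contr_E E e0" for e
    using in_degree_one_edge_unique[OF assms(1,2)] that unfolding contr_E_def by blast
  then have "{e \<in> contr_E E e0. contr_r r s e0 e = v} = {e \<in> E. r e = v}"
    using assms(3) unfolding contr_E_def contr_r_apply contr_vertex_def by auto
  then show ?thesis
    unfolding in_degree_def by simp
qed

lemma card_in_degree_one_contr:
  assumes "finite V" "e0 \<in> E" "r e0 \<in> V" "in_degree E r (r e0) = 1" "\<not> is_loop r s e0"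
  shows "card {v \<in> contr_V V r s e0. in_degree (contr_E E e0) (contr_r r s e0) v = 1} + 1
    = card {v \<in> V. in_degree E r v = 1}"
proof -
  have "{v \<in> contr_V V r s e0. in_degree (contr_E E e0) (contr_r r s e0) v = 1}
      = {v \<in> V. in_degree E r v = 1} - {r e0}"
    using assms(5) in_degree_contr[OF assms(4,2)] unfolding contr_V_def is_loop_def by auto
  moreover have "r e0 \<in> {v \<in> V. in_degree E r v = 1}"
    using assms(3,4) by simp
  moreover have "finite {v \<in> V. in_degree E r v = 1}"
    using assms(1) by simp
  ultimately show ?thesis
    by (metis Suc_eq_plus1 card_Suc_Diff1)
qed

lemma out_degree_contr:
  assumes "v \<noteq> s e0" "v \<noteq> r e0"
  shows "out_degree (contr_E E e0) (contr_s r s e0) v = out_degree E s v"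
proof -
  have "{e \<in> contr_E E e0. contr_s r s e0 e = v} = {e \<in> E. s e = v}"
    using assms unfolding contr_E_def contr_s_apply contr_vertex_def by auto
  then show ?thesis
    unfolding out_degree_def by simp
qed

lemma out_degree_contr_source:
  assumes "finite E" "e0 \<in> E" "\<not> is_loop r s e0"
  shows "out_degree (contr_E E e0) (contr_s r s e0) (s e0) + 1
    = out_degree E s (s e0) + out_degree E s (r e0)"
proof -
  have "{e \<in> contr_E E e0. contr_s r s e0 e = s e0}
      = ({e \<in> E. s e = s e0} - {e0}) \<union> {e \<in> E. s e = r e0}"
    using assms(3) unfolding contr_E_def contr_s_apply contr_vertex_def is_loop_def by auto
  moreover have "({e \<in> E. s e = s e0} - {e0}) \<inter> {e \<in> E. s e = r e0} = {}"
    using assms(3) unfolding is_loop_def by auto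
  moreover have "Suc (card ({e \<in> E. s e = s e0} - {e0})) = card {e \<in> E. s e = s e0}"
    using assms(1,2) by (intro card_Suc_Diff1) auto
  ultimately show ?thesis
    using assms(1) unfolding out_degree_def by (simp add: card_Un_disjoint)
qed

lemma in_degree_one_not_loop:
  assumes "finite_dgraph V E r s" "transitive_graph V E r s" "\<not> is_cycle V E r s"
    and "e0 \<in> E" "in_degree E r (r e0) = 1"
  shows "\<not> is_loop r s e0"
proof
  assume loop: "is_loop r s e0"
  define w where "w = r e0"
  have ends: "\<forall>e\<in>E. s e \<in> V \<and> r e \<in> V"
    using assms(1) unfolding finite_dgraph_def dgraph_def by blast
  then have "w \<in> V"
    using assms(4) unfolding w_def by blast
  have into_w: "e = e0" if "e \<in> E" "r e = w" for e
    using in_degree_one_edge_unique[OF assms(5,4)] that unfolding w_def by blast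
  then have closed: "\<forall>e\<in>E. r e = w \<longrightarrow> s e = w"
    using loop unfolding is_loop_def w_def by auto
  have "v = w" if "v \<in> V" for v
  proof -
    have "(v, w) \<in> (edge_rel E r s)\<^sup>*"
      using assms(2) that \<open>w \<in> V\<close> unfolding transitive_graph_def by blast
    then show ?thesis
      using closed by (rule rtrancl_edge_rel_into_closed)
  qed
  then have V: "V = {w}"
    using \<open>w \<in> V\<close> by blast
  have "E = {e0}"
  proof (intro set_eqI iffI)
    fix e assume "e \<in> E"
    then have "r e = w" using ends V by blast
    then show "e \<in> {e0}" using into_w \<open>e \<in> E\<close> by blast
  qed (use assms(4) in simp)
  then have "{e \<in> E. s e = w} = {e0}"
    using loop unfolding is_loop_def w_def by auto
  then have "out_degree E s w = 1"
    unfolding out_degree_def by simp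
  then have "is_cycle V E r s"
    using is_cycle_if_out_degree_one[OF assms(1,2)] V by simp
  then show False
    using assms(3) by blast
qed

lemma not_is_cycle_contr:
  assumes "finite_dgraph V E r s" "transitive_graph V E r s" "\<not> is_cycle V E r s"
    and "e0 \<in> E" "\<not> is_loop r s e0"
  shows "\<not> is_cycle (contr_V V r s e0) (contr_E E e0) (contr_r r s e0) (contr_s r s e0)"
proof
  assume cycle: "is_cycle (contr_V V r s e0) (contr_E E e0) (contr_r r s e0) (contr_s r s e0)"
  define u w where "u = s e0" and "w = r e0"
  have ends: "\<forall>e\<in>E. s e \<in> V \<and> r e \<in> V" and "finite E"
    using assms(1) unfolding finite_dgraph_def dgraph_def by blast+
  have "u \<noteq> w" "u \<in> V" "w \<in> V"
    using assms(4,5) ends unfolding is_loop_def u_def w_def by auto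
  have contr_out: "out_degree (contr_E E e0) (contr_s r s e0) v = 1" if "v \<in> V" "v \<noteq> w" for v
    using out_degree_is_cycle[OF cycle] assms(5) that unfolding contr_V_def is_loop_def w_def by simp
  obtain e where "e \<in> E" "s e = w"
  proof -
    have "(w, u) \<in> (edge_rel E r s)\<^sup>*"
      using assms(2) \<open>u \<in> V\<close> \<open>w \<in> V\<close> unfolding transitive_graph_def by blast
    then obtain y where "(w, y) \<in> edge_rel E r s"
      using \<open>u \<noteq> w\<close> by (metis converse_rtranclE)
    then show ?thesis
      using that unfolding edge_rel_def by blast
  qed
  then have "out_degree E s w > 0"
    using out_degree_pos[OF \<open>finite E\<close>] by metis
  moreover have "out_degree E s u > 0"
    using out_degree_pos[OF \<open>finite E\<close> assms(4)] unfolding u_def .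
  moreover have "out_degree E s u + out_degree E s w = 2"
    using out_degree_contr_source[OF \<open>finite E\<close> assms(4,5)] contr_out[OF \<open>u \<in> V\<close> \<open>u \<noteq> w\<close>]
    unfolding u_def w_def by simp
  ultimately have "out_degree E s u = 1" "out_degree E s w = 1"
    by linarith+
  then have "out_degree E s v = 1" if "v \<in> V" for v
  proof (cases "v = u \<or> v = w")
    case False
    then show ?thesis
      using contr_out[OF that] out_degree_contr[of v s e0 r E] unfolding u_def w_def by simp
  qed auto
  then have "is_cycle V E r s"
    using is_cycle_if_out_degree_one[OF assms(1,2)] \<open>u \<in> V\<close> by blast
  then show False
    using assms(3) by blast
qed

theorem lemma3p3:
  fixes V :: "'v set" and E :: "'e set" and r s :: "'e \<Rightarrow> 'v" and e0 :: 'e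
  assumes "finite_dgraph V E r s"
    and "transitive_graph V E r s"
    and "\<not> is_cycle V E r s"
    and "e0 \<in> E"
    and "in_degree E r (r e0) = 1"
  shows "\<not> is_loop r s e0
    \<and> card {v \<in> contr_V V r s e0. in_degree (contr_E E e0) (contr_r r s e0) v = 1} + 1
           = card {v \<in> V. in_degree E r v = 1}
    \<and> finite_dgraph (contr_V V r s e0) (contr_E E e0) (contr_r r s e0) (contr_s r s e0)
         \<and> transitive_graph (contr_V V r s e0) (contr_E E e0) (contr_r r s e0) (contr_s r s e0)
         \<and> \<not> is_cycle (contr_V V r s e0) (contr_E E e0) (contr_r r s e0) (contr_s r s e0)"
proof -
  have not_loop: "\<not> is_loop r s e0"
    using in_degree_one_not_loop[OF assms] .
  have "finite V" "r e0 \<in> V"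
    using assms(1,4) unfolding finite_dgraph_def dgraph_def by auto
  then show ?thesis
    using not_loop card_in_degree_one_contr[OF _ assms(4) _ assms(5) not_loop]
      finite_dgraph_contr[OF assms(1,4)] transitive_graph_contr[OF assms(2)]
      not_is_cycle_contr[OF assms(1-4) not_loop]
    by simp
qed

end
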